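(* Consider full-batch Noisy-SGD ($\mathcal{B}_t=\mathcal{B}_t'=[n]$) on adjacent datasets $\mathcal{D},\mathcal{D}'$, with iterates $W_t,W_t'$ and $W_0=W_0'$. Suppose the gradient update maps $\psi_t(x)=x-\frac{\eta}{n}\sum_{i\in[n]}\Pi_{B_K}[\nabla\ell_i(x)]$ and $\psi_t'(x)=x-\frac{\eta}{n}\sum_{i\in[n]}\Pi_{B_K}[\nabla\ell_i'(x)]$ are $c$-Lipschitz for some $c\ge0$. Then for all $t\ge0$, $$W_\infty(W_t,W_t')\le\min(D_t,D),\qquad D_t=\min\big(cD_{t-1}+2\eta K/n,\ D_{t-1}+2\eta K\big),\quad D_0=0.$$
   Context: Setting (Noisy-SGD). Let $\mathcal{K}\subset\mathbb{R}^d$ be a nonempty closed convex set of diameter $D$, $\Pi_{\mathcal{K}}$ the Euclidean projection. Let $\ell(\cdot;d)$, $d\in\mathcal{X}$, be differentiable losses on $\mathcal{K}$; for $\mathcal{D}=(d_1,\dots,d_n)$ write $\ell_i=\ell(\cdot;d_i)$, and $\ell_i'=\ell(\cdot;d_i')$ for $\mathcal{D}'$. $\Pi_{B_K}(v)=v\min(1,K/\|v\|)$. Noisy-SGD: $W_{t+1}=\Pi_{\mathcal{K}}\big[W_t-\eta\frac1b\sum_{i\in\mathcal{B}_t}\Pi_{B_K}[\nabla\ell_i(W_t)]+G_t\big]$, $G_t$ i.i.d. $N(0,\sigma^2I_d)$ independent of everything else; $W_t'$ is defined analogously on $\mathcal{D}'$ with its own noise $G_t'$ of the same law. Adjacent datasets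 differ in exactly one index. The infinite Wasserstein distance between laws $\mu,\nu$ on $\mathbb{R}^d$ is $W_\infty(\mu,\nu)=\inf_{\gamma\in\Gamma(\mu,\nu)}\operatorname{ess\,sup}_{(X,Y)\sim\gamma}\|X-Y\|$, $\Gamma(\mu,\nu)$ the set of couplings; $W_\infty(W_t,W_t')$ refers to the laws of $W_t,W_t'$. *)

theory Defs
  imports "HOL-Analysis.Analysis" "HOL-Probability.Probability"
begin

(* Projection onto the ball of radius K: v * min(1, K/|v|) (0 is mapped to 0). *)
definition clipK :: "real \<Rightarrow> 'a::real_normed_vector \<Rightarrow> 'a" where
  "clipK K v = min 1 (K / norm v) *\<^sub>R v"

definition gd_map :: "real \<Rightarrow> real \<Rightarrow> nat \<Rightarrow> (nat \<Rightarrow> 'a \<Rightarrow> 'a) \<Rightarrow> 'a \<Rightarrow> 'a::real_normed_vector" where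
  "gd_map \<eta> K n g x = x - (\<eta> / real n) *\<^sub>R (\<Sum>i<n. clipK K (g i x))"

definition gauss :: "real \<Rightarrow> 'a::euclidean_space measure" where
  "gauss \<sigma> = (if \<sigma> = 0 then return borel 0 else
     density lborel (\<lambda>x. ennreal ((2 * pi * \<sigma>\<^sup>2) powr (- real DIM('a) / 2)
                                  * exp (- (norm x)\<^sup>2 / (2 * \<sigma>\<^sup>2)))))"

fun nsgd :: "'a::euclidean_space set \<Rightarrow> ('a \<Rightarrow> 'a) \<Rightarrow> ('w \<Rightarrow> 'a) \<Rightarrow> (nat \<Rightarrow> 'w \<Rightarrow> 'a) \<Rightarrow> nat \<Rightarrow> 'w \<Rightarrow> 'a" where
  "nsgd C \<psi> W0 G 0 \<omega> = W0 \<omega>"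
| "nsgd C \<psi> W0 G (Suc t) \<omega> = closest_point C (\<psi> (nsgd C \<psi> W0 G t \<omega>) + G t \<omega>)"

definition couplings :: "'a::euclidean_space measure \<Rightarrow> 'a measure \<Rightarrow> ('a \<times> 'a) measure set" where
  "couplings \<mu> \<nu> = {\<gamma>. prob_space \<gamma> \<and> sets \<gamma> = sets (borel \<Otimes>\<^sub>M borel)
       \<and> distr \<gamma> borel fst = \<mu> \<and> distr \<gamma> borel snd = \<nu>}"

definition W_inf :: "'a::euclidean_space measure \<Rightarrow> 'a measure \<Rightarrow> ereal" where
  "W_inf \<mu> \<nu> = (INF \<gamma>\<in>couplings \<mu> \<nu>. esssup \<gamma> (\<lambda>(x, y). ereal (norm (x - y))))"

fun Dseq :: "real \<Rightarrow> real \<Rightarrow> real \<Rightarrow> nat \<Rightarrow> nat \<Rightarrow> real" where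
  "Dseq c \<eta> K n 0 = 0"
| "Dseq c \<eta> K n (Suc t) = min (c * Dseq c \<eta> K n t + 2 * \<eta> * K / real n) (Dseq c \<eta> K n t + 2 * \<eta> * K)"

end

theory Submission
  imports Defs
begin

text \<open>
  Run both chains with the same initial point and the same noise. Replacing one of the n
  clipped gradients moves the update by at most \<open>2\<eta>K/n\<close>, and each update moves a point by at
  most \<open>\<eta>K\<close>; together with the c-Lipschitz update and the 1-Lipschitz projection this bounds
  the distance of the coupled iterates by \<open>D\<^sub>t\<close>, and by diam C since both lie in C. The second
  chain driven by the shared noise has the same law as the one driven by its own noise, since
  both are the same measurable function of independent inputs with the same marginals, so
  this synchronous coupling witnesses the bound on \<open>W\<^sub>\<infinity>\<close>.
\<close>

lemma norm_clipK_le: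
  fixes v :: "'a::real_normed_vector"
  assumes "K > 0"
  shows "norm (clipK K v) \<le> K"
proof (cases "v = 0")
  case True
  then show ?thesis using assms by (simp add: clipK_def)
next
  case False
  have "norm (clipK K v) = min 1 (K / norm v) * norm v"
    using assms by (simp add: clipK_def)
  also have "\<dots> \<le> (K / norm v) * norm v" by (intro mult_right_mono) auto
  also have "\<dots> = K" using False by simp
  finally show ?thesis .
qed

lemma norm_gd_map_step_le:
  fixes g :: "nat \<Rightarrow> 'a \<Rightarrow> 'a::real_normed_vector"
  assumes "\<eta> \<ge> 0" "K > 0"
  shows "norm (gd_map \<eta> K n g x - x) \<le> \<eta> * K"
proof (cases "n = 0")
  case False
  have "norm (\<Sum>i<n. clipK K (g i x)) \<le> (\<Sum>i<n. norm (clipK K (g i x)))"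
    by (rule norm_sum)
  also have "\<dots> \<le> (\<Sum>i<n. K)"
    by (intro sum_mono norm_clipK_le assms(2))
  finally have sum: "norm (\<Sum>i<n. clipK K (g i x)) \<le> real n * K" by simp
  have "norm (gd_map \<eta> K n g x - x) = \<eta> / real n * norm (\<Sum>i<n. clipK K (g i x))"
    using assms(1) by (simp add: gd_map_def)
  also have "\<dots> \<le> \<eta> / real n * (real n * K)"
    using assms(1) by (intro mult_left_mono sum) simp
  also have "\<dots> = \<eta> * K" using False by simp
  finally show ?thesis .
qed (use assms in \<open>simp add: gd_map_def\<close>)

lemma norm_gd_map_adjacent_le:
  fixes g g' :: "nat \<Rightarrow> 'a \<Rightarrow> 'a::real_normed_vector"
  assumes "j < n" "\<And>i. i < n \<Longrightarrow> i \<noteq> j \<Longrightarrow> g i = g' i" "\<eta> \<ge> 0" "K > 0"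
  shows "norm (gd_map \<eta> K n g y - gd_map \<eta> K n g' y) \<le> 2 * \<eta> * K / real n"
proof -
  have rest: "(\<Sum>i\<in>{..<n}-{j}. clipK K (g i y)) = (\<Sum>i\<in>{..<n}-{j}. clipK K (g' i y))"
    by (rule sum.cong) (auto simp: assms(2))
  have "gd_map \<eta> K n g y - gd_map \<eta> K n g' y
      = (\<eta> / real n) *\<^sub>R (clipK K (g' j y) - clipK K (g j y))"
    using assms(1) rest
    by (simp add: gd_map_def sum.remove[of "{..<n}" j] algebra_simps)
  then have "norm (gd_map \<eta> K n g y - gd_map \<eta> K n g' y)
      = \<eta> / real n * norm (clipK K (g' j y) - clipK K (g j y))"
    using assms(3) by simp
  also have "\<dots> \<le> \<eta> / real n * (2 * K)"
    using norm_triangle_ineq4[of "clipK K (g' j y)" "clipK K (g j y)"]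
      norm_clipK_le[OF assms(4), of "g' j y"] norm_clipK_le[OF assms(4), of "g j y"] assms(3)
    by (intro mult_left_mono) simp_all
  also have "\<dots> = 2 * \<eta> * K / real n" by simp
  finally show ?thesis .
qed

lemma dist_gd_map_adjacent_le:
  fixes g g' :: "nat \<Rightarrow> 'a \<Rightarrow> 'a::real_normed_vector"
  assumes "j < n" "\<And>i. i < n \<Longrightarrow> i \<noteq> j \<Longrightarrow> g i = g' i" "\<eta> \<ge> 0" "K > 0"
    and lip: "dist (gd_map \<eta> K n g x) (gd_map \<eta> K n g y) \<le> c * dist x y"
  shows "dist (gd_map \<eta> K n g x) (gd_map \<eta> K n g' y)
     \<le> min (c * dist x y + 2 * \<eta> * K / real n) (dist x y + 2 * \<eta> * K)"
proof -
  have "dist (gd_map \<eta> K n g y) (gd_map \<eta> K n g' y) \<le> 2 * \<eta> * K / real n"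
    using norm_gd_map_adjacent_le[of j n g g' \<eta> K y, OF assms(1-4)] by (simp add: dist_norm)
  then have "dist (gd_map \<eta> K n g x) (gd_map \<eta> K n g' y) \<le> c * dist x y + 2 * \<eta> * K / real n"
    using dist_triangle[of "gd_map \<eta> K n g x" "gd_map \<eta> K n g' y" "gd_map \<eta> K n g y"] lip
    by linarith
  moreover have "dist (gd_map \<eta> K n g x) x \<le> \<eta> * K" "dist y (gd_map \<eta> K n g' y) \<le> \<eta> * K"
    using norm_gd_map_step_le[OF assms(3,4), of n g x] norm_gd_map_step_le[OF assms(3,4), of n g' y]
    by (simp_all add: dist_norm norm_minus_commute)
  then have "dist (gd_map \<eta> K n g x) (gd_map \<eta> K n g' y) \<le> dist x y + 2 * \<eta> * K"
    using dist_triangle[of "gd_map \<eta> K n g x" "gd_map \<eta> K n g' y" x]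
      dist_triangle[of x "gd_map \<eta> K n g' y" y]
    by linarith
  ultimately show ?thesis by simp
qed

lemma nsgd_in_set:
  assumes "C \<noteq> {}" "closed C" "W0 \<omega> \<in> C"
  shows "nsgd C \<psi> W0 G t \<omega> \<in> C"
  using assms by (cases t) (auto simp: closest_point_in_set)

lemma dist_nsgd_adjacent_le:
  fixes C :: "'a::euclidean_space set" and g g' :: "nat \<Rightarrow> 'a \<Rightarrow> 'a"
  assumes C: "C \<noteq> {}" "closed C" "convex C"
    and adj: "j < n" "\<And>i. i < n \<Longrightarrow> i \<noteq> j \<Longrightarrow> g i = g' i"
    and "\<eta> \<ge> 0" "K > 0" "c \<ge> 0"
    and lip: "\<And>x y. x \<in> C \<Longrightarrow> y \<in> C \<Longrightarrow>
               dist (gd_map \<eta> K n g x) (gd_map \<eta> K n g y) \<le> c * dist x y"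
    and W0: "W0 \<omega> \<in> C"
  shows "dist (nsgd C (gd_map \<eta> K n g) W0 G t \<omega>) (nsgd C (gd_map \<eta> K n g') W0 G t \<omega>)
     \<le> Dseq c \<eta> K n t"
proof (induction t)
  case 0
  then show ?case by simp
next
  case (Suc t)
  let ?x = "nsgd C (gd_map \<eta> K n g) W0 G t \<omega>"
  let ?y = "nsgd C (gd_map \<eta> K n g') W0 G t \<omega>"
  have "dist (nsgd C (gd_map \<eta> K n g) W0 G (Suc t) \<omega>) (nsgd C (gd_map \<eta> K n g') W0 G (Suc t) \<omega>)
      \<le> dist (gd_map \<eta> K n g ?x + G t \<omega>) (gd_map \<eta> K n g' ?y + G t \<omega>)"
    unfolding nsgd.simps by (rule closest_point_lipschitz[OF C(3,2,1)])
  also have "\<dots> = dist (gd_map \<eta> K n g ?x) (gd_map \<eta> K n g' ?y)"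
    by (simp add: dist_norm)
  also have "\<dots> \<le> min (c * dist ?x ?y + 2 * \<eta> * K / real n) (dist ?x ?y + 2 * \<eta> * K)"
    by (intro dist_gd_map_adjacent_le[OF adj assms(6,7)] lip nsgd_in_set[of C W0 \<omega>, OF C(1,2) W0])
  also have "\<dots> \<le> Dseq c \<eta> K n (Suc t)"
    unfolding Dseq.simps by (intro min.mono add_right_mono mult_left_mono Suc.IH \<open>c \<ge> 0\<close>)
  finally show ?case .
qed

text \<open>
  The extra inner projection only matters when the initial point
  lies outside C; it makes the function Borel when the update is merely continuous on C.
\<close>
fun nsgd_of_inputs :: "'a::euclidean_space set \<Rightarrow> ('a \<Rightarrow> 'a) \<Rightarrow> nat \<Rightarrow> (nat option \<Rightarrow> 'a) \<Rightarrow> 'a"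
  where
  "nsgd_of_inputs C \<psi> 0 v = v None"
| "nsgd_of_inputs C \<psi> (Suc t) v =
     closest_point C (\<psi> (closest_point C (nsgd_of_inputs C \<psi> t v)) + v (Some t))"

lemma nsgd_of_inputs_measurable:
  fixes C :: "'a::euclidean_space set"
  assumes C: "C \<noteq> {}" "closed C" "convex C" and \<psi>: "continuous_on C \<psi>"
    and I: "None \<in> I" "\<And>k. k < t \<Longrightarrow> Some k \<in> I"
  shows "nsgd_of_inputs C \<psi> t \<in> borel_measurable (PiM I (\<lambda>_. borel))"
  using I(2)
proof (induction t)
  case 0
  then show ?case using I(1) by (simp add: measurable_component_singleton)
next
  case (Suc t)
  have proj: "continuous_on UNIV (closest_point C)"
    by (rule continuous_on_closest_point[OF C(3,2,1)])
  have "continuous_on UNIV (\<lambda>x. \<psi> (closest_point C x))"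
    by (rule continuous_on_compose2[OF \<psi> proj]) (auto simp: closest_point_in_set C)
  then have "(\<lambda>x. \<psi> (closest_point C x)) \<in> borel_measurable borel"
    by (rule borel_measurable_continuous_onI)
  moreover have "closest_point C \<in> borel_measurable borel"
    by (rule borel_measurable_continuous_onI[OF proj])
  moreover have "(\<lambda>v. v (Some t)) \<in> borel_measurable (PiM I (\<lambda>_. borel))"
    using Suc.prems by (auto intro: measurable_component_singleton)
  ultimately show ?case
    using Suc by (simp add: measurable_compose[where f = "nsgd_of_inputs C \<psi> t"])
qed

lemma nsgd_eq_nsgd_of_inputs:
  assumes "C \<noteq> {}" "closed C" "W0 \<omega> \<in> C"
    and "v None = W0 \<omega>" "\<And>k. k < t \<Longrightarrow> v (Some k) = G k \<omega>"
  shows "nsgd_of_inputs C \<psi> t v = nsgd C \<psi> W0 G t \<omega>"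
  using assms(5)
  by (induction t) (auto simp: assms(4) closest_point_self nsgd_in_set[of C W0 \<omega>, OF assms(1-3)])

lemma nsgd_distr_eq_PiM:
  fixes C :: "'a::euclidean_space set" and W0 :: "'w \<Rightarrow> 'a" and G :: "nat \<Rightarrow> 'w \<Rightarrow> 'a"
  assumes C: "C \<noteq> {}" "closed C" "convex C" and \<psi>: "continuous_on C \<psi>"
    and "prob_space M"
    and W0: "W0 \<in> borel_measurable M" "\<And>\<omega>. \<omega> \<in> space M \<Longrightarrow> W0 \<omega> \<in> C"
    and G: "\<And>t. G t \<in> borel_measurable M" "\<And>t. distr M borel (G t) = \<mu>"
    and indep: "prob_space.indep_vars M (\<lambda>_. borel) (\<lambda>i. case i of None \<Rightarrow> W0 | Some t \<Rightarrow> G t) UNIV"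
  shows "nsgd C \<psi> W0 G t \<in> borel_measurable M"
    and "distr M borel (nsgd C \<psi> W0 G t) =
      distr (PiM (insert None (Some ` {..<t})) (\<lambda>i. case i of None \<Rightarrow> distr M borel W0 | Some _ \<Rightarrow> \<mu>))
        borel (nsgd_of_inputs C \<psi> t)"
proof -
  interpret prob_space M by fact
  define I where "I = insert None (Some ` {..<t})"
  define X where "X = (\<lambda>i. case i of None \<Rightarrow> W0 | Some t \<Rightarrow> G t)"
  define J where "J = (\<lambda>\<omega>. \<lambda>i\<in>I. X i \<omega>)"
  have X: "\<And>i. X i \<in> borel_measurable M"
    using W0 G by (auto simp: X_def split: option.splits)
  have J: "J \<in> measurable M (PiM I (\<lambda>_. borel))"
    unfolding J_def by (rule measurable_restrict) (use X in auto)
  have F: "nsgd_of_inputs C \<psi> t \<in> borel_measurable (PiM I (\<lambda>_. borel))"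
    by (rule nsgd_of_inputs_measurable[OF C \<psi>]) (auto simp: I_def)
  have agree: "nsgd_of_inputs C \<psi> t (J \<omega>) = nsgd C \<psi> W0 G t \<omega>" if "\<omega> \<in> space M" for \<omega>
    by (rule nsgd_eq_nsgd_of_inputs[of C W0 \<omega>, OF C(1,2) W0(2)[OF that]]) (auto simp: J_def I_def X_def)
  have "(\<lambda>\<omega>. nsgd_of_inputs C \<psi> t (J \<omega>)) \<in> borel_measurable M"
    using measurable_compose[OF J F] by (simp add: o_def)
  then show "nsgd C \<psi> W0 G t \<in> borel_measurable M"
    by (rule measurable_cong[THEN iffD1, rotated]) (simp add: agree)
  have "indep_vars (\<lambda>_. borel) X I"
    using indep_vars_subset[OF indep] by (simp add: X_def)
  then have "distr M (PiM I (\<lambda>_. borel)) J = PiM I (\<lambda>i. distr M borel (X i))"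
    using indep_vars_iff_distr_eq_PiM[where I = I and M' = "\<lambda>_. borel" and X = X] X
    by (auto simp: J_def I_def)
  also have "\<dots> = PiM I (\<lambda>i. case i of None \<Rightarrow> distr M borel W0 | Some _ \<Rightarrow> \<mu>)"
    by (rule PiM_cong) (auto simp: X_def G split: option.splits)
  finally have inputs: "distr M (PiM I (\<lambda>_. borel)) J
      = PiM I (\<lambda>i. case i of None \<Rightarrow> distr M borel W0 | Some _ \<Rightarrow> \<mu>)" .
  have "distr M borel (nsgd C \<psi> W0 G t) = distr M borel (\<lambda>\<omega>. nsgd_of_inputs C \<psi> t (J \<omega>))"
    by (rule distr_cong) (simp_all add: agree)
  also have "\<dots> = distr (distr M (PiM I (\<lambda>_. borel)) J) borel (nsgd_of_inputs C \<psi> t)"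
    by (rule distr_distr[OF F J, symmetric, unfolded o_def])
  finally show "distr M borel (nsgd C \<psi> W0 G t) =
      distr (PiM (insert None (Some ` {..<t})) (\<lambda>i. case i of None \<Rightarrow> distr M borel W0 | Some _ \<Rightarrow> \<mu>))
        borel (nsgd_of_inputs C \<psi> t)"
    using inputs by (simp add: I_def)
qed

lemma nsgd_distr_eq_if_noise_distr_eq:
  fixes C :: "'a::euclidean_space set" and W0 :: "'w \<Rightarrow> 'a" and G G' :: "nat \<Rightarrow> 'w \<Rightarrow> 'a"
  assumes C: "C \<noteq> {}" "closed C" "convex C" and \<psi>: "continuous_on C \<psi>"
    and P: "prob_space M"
    and W0: "W0 \<in> borel_measurable M" "\<And>\<omega>. \<omega> \<in> space M \<Longrightarrow> W0 \<omega> \<in> C"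
    and G: "\<And>t. G t \<in> borel_measurable M" "\<And>t. distr M borel (G t) = \<mu>"
    and G': "\<And>t. G' t \<in> borel_measurable M" "\<And>t. distr M borel (G' t) = \<mu>"
    and indep: "prob_space.indep_vars M (\<lambda>_. borel) (\<lambda>i. case i of None \<Rightarrow> W0 | Some t \<Rightarrow> G t) UNIV"
    and indep': "prob_space.indep_vars M (\<lambda>_. borel) (\<lambda>i. case i of None \<Rightarrow> W0 | Some t \<Rightarrow> G' t) UNIV"
  shows "distr M borel (nsgd C \<psi> W0 G t) = distr M borel (nsgd C \<psi> W0 G' t)"
  using nsgd_distr_eq_PiM(2)[OF C \<psi> P W0 G indep] nsgd_distr_eq_PiM(2)[OF C \<psi> P W0 G' indep']
  by simp

lemma W_inf_distr_le:
  fixes X Y :: "'w \<Rightarrow> 'a::euclidean_space"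
  assumes "prob_space M" "X \<in> borel_measurable M" "Y \<in> borel_measurable M"
    and bound: "\<And>\<omega>. \<omega> \<in> space M \<Longrightarrow> dist (X \<omega>) (Y \<omega>) \<le> B"
  shows "W_inf (distr M borel X) (distr M borel Y) \<le> ereal B"
proof -
  interpret prob_space M by fact
  have XY: "(\<lambda>\<omega>. (X \<omega>, Y \<omega>)) \<in> measurable M (borel :: ('a \<times> 'a) measure)"
    using measurable_Pair[OF assms(2,3)] by (simp add: borel_prod)
  define \<gamma> where "\<gamma> = distr M (borel :: ('a \<times> 'a) measure) (\<lambda>\<omega>. (X \<omega>, Y \<omega>))"
  have fst: "(fst :: 'a \<times> 'a \<Rightarrow> 'a) \<in> borel_measurable borel"
    by (intro borel_measurable_continuous_onI continuous_intros)
  have snd: "(snd :: 'a \<times> 'a \<Rightarrow> 'a) \<in> borel_measurable borel"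
    by (intro borel_measurable_continuous_onI continuous_intros)
  have "\<gamma> \<in> couplings (distr M borel X) (distr M borel Y)"
    unfolding couplings_def \<gamma>_def
    using prob_space_distr[OF XY] distr_distr[OF fst XY] distr_distr[OF snd XY]
    by (simp add: o_def borel_prod[symmetric])
  then have "W_inf (distr M borel X) (distr M borel Y) \<le> esssup \<gamma> (\<lambda>(x, y). ereal (norm (x - y)))"
    unfolding W_inf_def by (rule INF_lower)
  also have "\<dots> \<le> ereal B"
  proof (rule esssup_I)
    have dist: "(\<lambda>(x, y). ereal (norm (x - y))) \<in> borel_measurable (borel :: ('a \<times> 'a) measure)"
      unfolding case_prod_beta
      by (intro borel_measurable_ereal borel_measurable_continuous_onI continuous_intros)
    then show "(\<lambda>(x, y). ereal (norm (x - y))) \<in> borel_measurable \<gamma>"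
      by (simp add: \<gamma>_def)
    have "{p :: 'a \<times> 'a \<in> space borel. (case p of (x, y) \<Rightarrow> ereal (norm (x - y))) \<le> ereal B}
        \<in> sets borel"
      using dist by measurable
    then show "AE p in \<gamma>. (case p of (x, y) \<Rightarrow> ereal (norm (x - y))) \<le> ereal B"
      unfolding \<gamma>_def using bound
      by (subst AE_distr_iff[OF XY]) (auto simp: dist_norm)
  qed
  finally show ?thesis .
qed

theorem mainTheorem7:
  fixes C :: "'a::euclidean_space set"
    and loss :: "'x \<Rightarrow> 'a \<Rightarrow> real" and grad :: "'x \<Rightarrow> 'a \<Rightarrow> 'a"
    and dat dat' :: "nat \<Rightarrow> 'x"
    and n :: nat and \<eta> K \<sigma> c :: real
    and M :: "'w measure" and W0 :: "'w \<Rightarrow> 'a" and G G' :: "nat \<Rightarrow> 'w \<Rightarrow> 'a"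
  assumes C: "C \<noteq> {}" "closed C" "convex C" "bounded C"
    and diff: "\<And>z x. x \<in> C \<Longrightarrow> (loss z has_derivative (\<lambda>h. grad z x \<bullet> h)) (at x within C)"
    and adj: "\<exists>j<n. \<forall>i<n. i \<noteq> j \<longrightarrow> dat i = dat' i"
    and n: "n \<ge> 1" and eta: "\<eta> \<ge> 0" and Kpos: "K > 0" and sig: "\<sigma> \<ge> 0" and c: "c \<ge> 0"
    and lip: "\<And>x y. x \<in> C \<Longrightarrow> y \<in> C \<Longrightarrow>
               dist (gd_map \<eta> K n (\<lambda>i. grad (dat i)) x) (gd_map \<eta> K n (\<lambda>i. grad (dat i)) y) \<le> c * dist x y"
    and lip': "\<And>x y. x \<in> C \<Longrightarrow> y \<in> C \<Longrightarrow>
               dist (gd_map \<eta> K n (\<lambda>i. grad (dat' i)) x) (gd_map \<eta> K n (\<lambda>i. grad (dat' i)) y) \<le> c * dist x y"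
    and P: "prob_space M"
    and W0: "W0 \<in> borel_measurable M" "\<And>\<omega>. \<omega> \<in> space M \<Longrightarrow> W0 \<omega> \<in> C"
    and G: "\<And>t. G t \<in> borel_measurable M" "\<And>t. distr M borel (G t) = gauss \<sigma>"
    and G': "\<And>t. G' t \<in> borel_measurable M" "\<And>t. distr M borel (G' t) = gauss \<sigma>"
    and indep: "prob_space.indep_vars M (\<lambda>_. borel) (\<lambda>i. case i of None \<Rightarrow> W0 | Some t \<Rightarrow> G t) UNIV"
    and indep': "prob_space.indep_vars M (\<lambda>_. borel) (\<lambda>i. case i of None \<Rightarrow> W0 | Some t \<Rightarrow> G' t) UNIV"
  shows "W_inf (distr M borel (nsgd C (gd_map \<eta> K n (\<lambda>i. grad (dat i))) W0 G t))
               (distr M borel (nsgd C (gd_map \<eta> K n (\<lambda>i. grad (dat' i))) W0 G' t))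
         \<le> ereal (min (Dseq c \<eta> K n t) (diameter C))"
proof -
  define \<psi> where "\<psi> = gd_map \<eta> K n (\<lambda>i. grad (dat i))"
  define \<psi>' where "\<psi>' = gd_map \<eta> K n (\<lambda>i. grad (dat' i))"
  obtain j where j: "j < n" "\<And>i. i < n \<Longrightarrow> i \<noteq> j \<Longrightarrow> grad (dat i) = grad (dat' i)"
    using adj by metis
  have cont: "continuous_on C \<psi>"
    unfolding \<psi>_def by (rule lipschitz_on_continuous_on, rule lipschitz_onI) (use lip c in auto)
  have cont': "continuous_on C \<psi>'"
    unfolding \<psi>'_def by (rule lipschitz_on_continuous_on, rule lipschitz_onI) (use lip' c in auto)
  note meas = nsgd_distr_eq_PiM(1)[OF C(1-3) cont P W0 G indep]
    nsgd_distr_eq_PiM(1)[OF C(1-3) cont' P W0 G indep]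
  have coupled: "dist (nsgd C \<psi> W0 G t \<omega>) (nsgd C \<psi>' W0 G t \<omega>) \<le> min (Dseq c \<eta> K n t) (diameter C)"
    if "\<omega> \<in> space M" for \<omega>
    using dist_nsgd_adjacent_le[of C j n "\<lambda>i. grad (dat i)" "\<lambda>i. grad (dat' i)" \<eta> K c W0 \<omega>,
          OF C(1-3) j eta Kpos c lip W0(2)[OF that]]
      diameter_bounded_bound[OF C(4) nsgd_in_set[of C W0 \<omega>, OF C(1,2) W0(2)[OF that]]
        nsgd_in_set[of C W0 \<omega>, OF C(1,2) W0(2)[OF that]]]
    unfolding \<psi>_def \<psi>'_def by simp
  have noise: "distr M borel (nsgd C \<psi>' W0 G t) = distr M borel (nsgd C \<psi>' W0 G' t)"
    by (rule nsgd_distr_eq_if_noise_distr_eq[OF C(1-3) cont' P W0 G G' indep indep'])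
  have "W_inf (distr M borel (nsgd C \<psi> W0 G t)) (distr M borel (nsgd C \<psi>' W0 G' t))
      \<le> ereal (min (Dseq c \<eta> K n t) (diameter C))"
    unfolding noise[symmetric] by (rule W_inf_distr_le[OF P meas(1)[of t] meas(2)[of t] coupled])
  then show ?thesis by (simp only: \<psi>_def \<psi>'_def)
qed

end
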